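(* Fix $\alpha\in(1/2,1)$. Then for every $n\ge 0$ and every rooted tree $T$ on $n$ nodes, the tree $U_n$ defined below contains a subgraph isomorphic to a subdivision of $T$. Equivalently, there is an injective map $f$ from the nodes of $T$ to the nodes of $U_n$ with $f(\mathsf{NCA}(u,v))=\mathsf{NCA}(f(u),f(v))$ for all $u,v$. Definition of $a_N$: for integers $N\ge0$, $a_0$ is the empty sequence, $a_1=(1)$, and for $N\ge 2$, $a_N=a_{\lfloor N/2\rfloor}\oplus(N)\oplus a_{\lfloor N/2\rfloor}$, where $\oplus$ denotes concatenation. Definition of $U_n$: $U_0$ is the empty tree and $U_1$ is a single node. For $n\ge2$, let $N=\lfloor(1-\alpha)n\rfloor$ and $a_N=(a(1),\dots,a(k))$. Then $U_n$ consists of a path $u_1-\dots-u_{k+1}$ rooted at $u_1$, with the following subtrees attached: - for each $i=1,\dots,k$, a copy of $U_{a(i)-1}$ and, for every integer $j\ge 2$, a copy of $U_{\lfloor a(i)/j\rfloor}$, all attached to $u_i$; - a copy of $U_{\lfloor\alpha n\rfloor}$ and, for every integer $j\ge2$, a copy of $U_{\lfloor (n-1)/j\rfloor}$, all attached to $u_{k+1}$. Attaching a copy of a tree to a node means making its root a child of that node; copies of the empty tree add nothing.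
   Context: Trees are rooted and unordered, with edges directed from parent to child. The degree of a node is its number of children. $\mathsf{NCA}$ denotes the nearest common ancestor. *)

theory Defs
  imports Complex_Main "HOL-Library.Sublist"
begin

text \<open>Rooted trees; the children list order is irrelevant for the notions used below
(node sets addressed by child-index paths, NCA = longest common prefix of paths).\<close>
datatype tree = Node "tree list"

inductive is_node :: "tree \<Rightarrow> nat list \<Rightarrow> bool" where
  root: "is_node t []"
| child: "i < length ts \<Longrightarrow> is_node (ts ! i) p \<Longrightarrow> is_node (Node ts) (i # p)"

definition tree_nodes :: "tree \<Rightarrow> nat list set" where
  "tree_nodes t = {p. is_node t p}"

definition NCA :: "nat list \<Rightarrow> nat list \<Rightarrow> nat list" where
  "NCA u v = longest_common_prefix u v"

fun aseq :: "nat \<Rightarrow> nat list" where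
  "aseq N = (if N = 0 then [] else if N = 1 then [1]
             else aseq (N div 2) @ [N] @ aseq (N div 2))"

text \<open>Path u_1 - ... - u_(k+1): first argument lists the extra children of u_1..u_k,
  second argument the children of u_(k+1).\<close>
fun pathtree :: "tree list list \<Rightarrow> tree list \<Rightarrow> tree" where
  "pathtree [] b = Node b"
| "pathtree (c # cs) b = Node (pathtree cs b # c)"

text \<open>Uf alpha n is the forest of copies contributed by U_n: [] for the empty tree U_0,
  [U_n] otherwise. Recursive calls are guarded by m < n, which always holds for
  alpha in (1/2,1) (all recursive sizes are < n); the guard only ensures termination.
  Copies U_(floor(a/j)) for j > a and U_(floor((n-1)/j)) for j > n are empty and omitted.\<close>
function Uf :: "real \<Rightarrow> nat \<Rightarrow> tree list" where
  "Uf alpha n =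
    (if n = 0 then [] else if n = 1 then [Node []] else
     (let N = nat \<lfloor>(1 - alpha) * real n\<rfloor>;
          a = aseq N;
          rec = (\<lambda>m. if m < n then Uf alpha m else []);
          side = (\<lambda>x. rec (x - 1) @ concat (map (\<lambda>j. rec (x div j)) [2..<x+1]));
          bottom = rec (nat \<lfloor>alpha * real n\<rfloor>) @ concat (map (\<lambda>j. rec ((n - 1) div j)) [2..<n+1])
      in [pathtree (map side a) bottom]))"
  by pat_completeness auto
termination
  by (relation "measure (\<lambda>(alpha, n). n)") auto

definition Utree :: "real \<Rightarrow> nat \<Rightarrow> tree" where
  "Utree alpha n = hd (Uf alpha n)"

end

theory Submission
  imports Defs
begin

text \<open>By strong induction on \<open>n\<close>, every tree with at most \<open>n\<close> nodes embeds into \<open>U\<^sub>n\<close>.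
  Follow the heavy path of \<open>T\<close>, always descending into a child with more than \<open>\<alpha>n\<close>
  nodes. Each node of this path, together with its other children (\<open>b\<close> nodes in all), is
  sent to a path node \<open>u(i)\<close> with \<open>a(i) \<ge> b\<close>; ranked by decreasing size, the \<open>j\<close>-th of
  those children has at most \<open>(b - 1)/j\<close> nodes and so fits into the copy of
  \<open>U\<lfloor>a(i)/j\<rfloor>\<close> (or \<open>U(a(i) - 1)\<close> for \<open>j = 1\<close>) hanging there. The numbers \<open>b\<close> sum to less
  than \<open>|T| - \<alpha>n \<le> (1 - \<alpha>)n\<close>, and every sequence of positive integers with sum at most
  \<open>N\<close> is dominated by a subsequence of \<open>a\<^sub>N\<close>, so suitable path nodes exist in order.
  The rest of \<open>T\<close>, all of whose children have at most \<open>\<alpha>n\<close> nodes, goes to \<open>u(k+1)\<close>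
  in the same way.\<close>

declare Uf.simps [simp del] aseq.simps [simp del]

subsection \<open>Trees and NCA-preserving embeddings\<close>

lemma is_node_Node_iff:
  "is_node (Node ts) p \<longleftrightarrow> p = [] \<or> (\<exists>i q. p = i # q \<and> i < length ts \<and> is_node (ts ! i) q)"
  by (auto intro: is_node.intros elim: is_node.cases)

lemma tree_nodes_Node:
  "tree_nodes (Node ts) = insert [] (\<Union>i<length ts. Cons i ` tree_nodes (ts ! i))"
  unfolding tree_nodes_def by (rule set_eqI) (simp add: is_node_Node_iff, blast)

lemma finite_tree_nodes: "finite (tree_nodes t)"
  by (induction t) (auto simp: tree_nodes_Node)

definition tree_size :: "tree \<Rightarrow> nat" where
  "tree_size t = card (tree_nodes t)"

lemma tree_size_Node: "tree_size (Node ts) = 1 + (\<Sum>i<length ts. tree_size (ts ! i))"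
proof -
  have "card (\<Union>i<length ts. Cons i ` tree_nodes (ts ! i))
      = (\<Sum>i<length ts. card (Cons i ` tree_nodes (ts ! i)))"
    by (rule card_UN_disjoint) (auto simp: finite_tree_nodes)
  also have "\<dots> = (\<Sum>i<length ts. tree_size (ts ! i))"
    by (simp add: card_image tree_size_def)
  finally show ?thesis
    unfolding tree_size_def tree_nodes_Node by (subst card_insert_disjoint) (auto simp: finite_tree_nodes)
qed

lemma tree_size_pos: "1 \<le> tree_size t"
  using finite_tree_nodes[of t] is_node.root[of t]
  by (auto simp: tree_size_def tree_nodes_def Suc_le_eq card_gt_0_iff)

lemma NCA_simps [simp]:
  "NCA (i # p) (i # q) = i # NCA p q"
  "i \<noteq> j \<Longrightarrow> NCA (i # p) (j # q) = []"
  "NCA [] q = []"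
  "NCA p [] = []"
  unfolding NCA_def by (simp_all add: longest_common_prefix.simps(3) split: list.split)

definition nca_embedding :: "(nat list \<Rightarrow> nat list) \<Rightarrow> tree \<Rightarrow> tree \<Rightarrow> bool" where
  "nca_embedding f T S \<longleftrightarrow> inj_on f (tree_nodes T) \<and> f ` tree_nodes T \<subseteq> tree_nodes S \<and>
     (\<forall>u\<in>tree_nodes T. \<forall>v\<in>tree_nodes T. f (NCA u v) = NCA (f u) (f v))"

definition embeds :: "tree \<Rightarrow> tree \<Rightarrow> bool" where
  "embeds T S \<longleftrightarrow> (\<exists>f. nca_embedding f T S)"

definition family_embeds :: "'i set \<Rightarrow> ('i \<Rightarrow> tree) \<Rightarrow> tree list \<Rightarrow> bool" where
  "family_embeds I t cs \<longleftrightarrow>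
     (\<exists>pos. inj_on pos I \<and> (\<forall>i\<in>I. pos i < length cs \<and> embeds (t i) (cs ! pos i)))"

lemma embeds_leaf: "embeds (Node []) S"
  unfolding embeds_def nca_embedding_def
  by (rule exI[of _ "\<lambda>p. []"]) (auto simp: tree_nodes_def is_node.root is_node_Node_iff)

lemma embeds_Node_child:
  assumes "i < length cs" and "embeds T (cs ! i)"
  shows "embeds T (Node cs)"
proof -
  obtain g where "nca_embedding g T (cs ! i)"
    using assms(2) unfolding embeds_def by blast
  then have "nca_embedding (\<lambda>p. i # g p) T (Node cs)"
    using assms(1) unfolding nca_embedding_def tree_nodes_def inj_on_def
    by (auto simp: is_node_Node_iff)
  then show ?thesis unfolding embeds_def by blast
qed

lemma embeds_pathtree_append:
  "embeds T (pathtree cs b) \<Longrightarrow> embeds T (pathtree (pre @ cs) b)"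
  by (induction pre) (auto intro: embeds_Node_child[of 0])

lemma nca_embedding_Node:
  assumes inj: "inj_on pos {..<length ts}"
    and ch: "\<forall>i<length ts. pos i < length cs \<and> nca_embedding (g i) (ts ! i) (cs ! pos i)"
  shows "nca_embedding (\<lambda>p. case p of [] \<Rightarrow> [] | i # q \<Rightarrow> pos i # g i q) (Node ts) (Node cs)"
    (is "nca_embedding ?f _ _")
proof -
  have node: "i < length ts \<and> is_node (ts ! i) p" if "i # p \<in> tree_nodes (Node ts)" for i p
    using that by (simp add: tree_nodes_def is_node_Node_iff)
  have child: "nca_embedding (g i) (ts ! i) (cs ! pos i)" "pos i < length cs"
    if "i < length ts" for i
    using ch that by auto
  have "inj_on ?f (tree_nodes (Node ts))"
  proof (rule inj_onI)
    fix u v assume u: "u \<in> tree_nodes (Node ts)" and v: "v \<in> tree_nodes (Node ts)"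
      and eq: "?f u = ?f v"
    show "u = v"
    proof (cases u)
      case Nil then show ?thesis using eq by (cases v) auto
    next
      case (Cons i p)
      then obtain j q where v_eq: "v = j # q" using eq by (cases v) auto
      have i: "i < length ts" "is_node (ts ! i) p" and j: "j < length ts" "is_node (ts ! j) q"
        using node u v Cons v_eq by auto
      have "i = j" using eq Cons v_eq inj i j by (auto dest: inj_onD)
      moreover have "g i p = g i q" using eq Cons v_eq \<open>i = j\<close> by simp
      ultimately show ?thesis
        using child(1)[OF i(1)] i j Cons v_eq
        unfolding nca_embedding_def tree_nodes_def by (auto dest: inj_onD)
    qed
  qed
  moreover have "?f ` tree_nodes (Node ts) \<subseteq> tree_nodes (Node cs)"
  proof clarify
    fix u assume u: "u \<in> tree_nodes (Node ts)"
    show "?f u \<in> tree_nodes (Node cs)"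
    proof (cases u)
      case Nil then show ?thesis by (simp add: tree_nodes_def is_node.root)
    next
      case (Cons i p)
      with node u have "i < length ts" "is_node (ts ! i) p" by auto
      with child show ?thesis
        using Cons unfolding nca_embedding_def tree_nodes_def by (auto simp: is_node_Node_iff)
    qed
  qed
  moreover have "?f (NCA u v) = NCA (?f u) (?f v)"
    if u: "u \<in> tree_nodes (Node ts)" and v: "v \<in> tree_nodes (Node ts)" for u v
  proof (cases "u = [] \<or> v = []")
    case True then show ?thesis by (auto split: list.split)
  next
    case False
    then obtain i p j q where uv: "u = i # p" "v = j # q" by (cases u; cases v) auto
    have i: "i < length ts" "is_node (ts ! i) p" and j: "j < length ts" "is_node (ts ! j) q"
      using node u v uv by auto
    show ?thesis
    proof (cases "i = j")
      case True
      then show ?thesis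
        using uv child(1)[OF i(1)] i j unfolding nca_embedding_def tree_nodes_def by auto
    next
      case False
      then have "pos i \<noteq> pos j" using inj i j by (auto dest: inj_onD)
      then show ?thesis using uv False by simp
    qed
  qed
  ultimately show ?thesis unfolding nca_embedding_def by blast
qed

lemma embeds_Node:
  assumes "family_embeds {..<length ts} (nth ts) cs"
  shows "embeds (Node ts) (Node cs)"
proof -
  obtain pos where pos: "inj_on pos {..<length ts}"
    "\<forall>i<length ts. pos i < length cs \<and> embeds (ts ! i) (cs ! pos i)"
    using assms unfolding family_embeds_def by auto
  then obtain g where "\<forall>i<length ts. pos i < length cs \<and> nca_embedding (g i) (ts ! i) (cs ! pos i)"
    unfolding embeds_def by metis
  from nca_embedding_Node[OF pos(1) this] show ?thesis
    unfolding embeds_def by blast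
qed

lemma family_embeds_Cons:
  assumes "family_embeds (I - {h}) t cs" and "embeds (t h) c"
  shows "family_embeds I t (c # cs)"
proof -
  obtain pos where pos: "inj_on pos (I - {h})"
    "\<forall>i\<in>I - {h}. pos i < length cs \<and> embeds (t i) (cs ! pos i)"
    using assms(1) unfolding family_embeds_def by auto
  let ?pos = "\<lambda>i. if i = h then 0 else Suc (pos i)"
  have "inj_on ?pos I" using pos(1) by (auto simp: inj_on_def)
  moreover have "\<forall>i\<in>I. ?pos i < length (c # cs) \<and> embeds (t i) ((c # cs) ! ?pos i)"
    using pos(2) assms(2) by auto
  ultimately show ?thesis unfolding family_embeds_def by blast
qed

subsection \<open>Placing a family of subtrees into copies of smaller trees\<close>

text \<open>Rank the members by decreasing size, ties broken by index: the member of rank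
  \<open>r\<close> has at least \<open>r\<close> members at least as large, so \<open>r\<close> times its size is at most
  the total.\<close>

lemma exists_rank_bounded_by_sum:
  fixes s :: "'i::linorder \<Rightarrow> nat"
  assumes "finite I" and "sum s I \<le> K"
  shows "\<exists>\<rho>. inj_on \<rho> I \<and> (\<forall>i\<in>I. 1 \<le> \<rho> i \<and> \<rho> i * s i \<le> K)"
proof -
  define A where "A i = {j\<in>I. s i < s j \<or> (s j = s i \<and> j \<le> i)}" for i
  have fin: "finite (A i)" for i using assms(1) unfolding A_def by auto
  have less: "card (A j) < card (A i)"
    if "i \<in> I" "j \<in> I" "s i < s j \<or> (s i = s j \<and> j < i)" for i j
  proof (rule psubset_card_mono[OF fin])
    have "i \<in> A i" "i \<notin> A j" using that unfolding A_def by auto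
    then show "A j \<subset> A i" using that unfolding A_def by auto
  qed
  have "inj_on (\<lambda>i. card (A i)) I"
  proof (rule inj_onI, rule ccontr)
    fix i j assume "i \<in> I" "j \<in> I" "card (A i) = card (A j)" "i \<noteq> j"
    then have "s i < s j \<or> (s i = s j \<and> j < i) \<or> s j < s i \<or> (s j = s i \<and> i < j)"
      by (metis linorder_neqE_nat neq_iff)
    then show False using less[of i j] less[of j i] \<open>i \<in> I\<close> \<open>j \<in> I\<close> \<open>card (A i) = card (A j)\<close>
      by auto
  qed
  moreover have "1 \<le> card (A i) \<and> card (A i) * s i \<le> K" if i: "i \<in> I" for i
  proof
    have "i \<in> A i" using i unfolding A_def by auto
    then show "1 \<le> card (A i)" using fin by (auto simp: Suc_le_eq card_gt_0_iff)
    have "card (A i) * s i \<le> sum s (A i)"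
      by (rule sum_bounded_below[of "A i" "s i" s, simplified]) (auto simp: A_def)
    also have "\<dots> \<le> sum s I" using assms(1) by (intro sum_mono2) (auto simp: A_def)
    finally show "card (A i) * s i \<le> K" using assms(2) by simp
  qed
  ultimately show ?thesis by blast
qed

lemma nth_filter_length_filter_take:
  assumes "j < length xs" and "P (xs ! j)"
  shows "length (filter P (take j xs)) < length (filter P xs)"
    and "filter P xs ! length (filter P (take j xs)) = xs ! j"
proof -
  have "filter P xs = filter P (take j xs) @ xs ! j # filter P (drop (Suc j) xs)"
    using assms id_take_nth_drop[OF assms(1)] by (metis filter.simps(2) filter_append)
  then show "length (filter P (take j xs)) < length (filter P xs)"
    and "filter P xs ! length (filter P (take j xs)) = xs ! j"
    by (simp_all add: nth_append)
qed

lemma inj_on_length_filter_take: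
  "inj_on (\<lambda>j. length (filter P (take j xs))) {j. j < length xs \<and> P (xs ! j)}"
proof -
  have "length (filter P (take j xs)) < length (filter P (take k xs))"
    if "j < k" "k \<le> length xs" "P (xs ! j)" for j k
  proof -
    have "take k xs = take j xs @ xs ! j # take (k - Suc j) (drop (Suc j) xs)"
      using that by (metis Suc_leI add_Suc_right le_add_diff_inverse less_le_trans
          take_Suc_conv_app_nth take_add append.assoc append_Cons append_Nil)
    then show ?thesis using that(3) by simp
  qed
  then show ?thesis
    by (intro inj_onI) (metis (no_types, lifting) linorder_neqE_nat mem_Collect_eq
        less_imp_le_nat less_not_refl)
qed

text \<open>The member of rank \<open>r\<close> goes into the \<open>r\<close>-th copy; copies of size 0 are absent,
  whence the filter.\<close>

lemma family_embeds_copies: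
  fixes U :: "nat \<Rightarrow> tree" and t :: "'i::linorder \<Rightarrow> tree"
  assumes "finite I" and "(\<Sum>i\<in>I. tree_size (t i)) \<le> K"
    and "L \<noteq> []" and first: "\<forall>i\<in>I. tree_size (t i) \<le> L ! 0"
    and later: "\<forall>r. 2 \<le> r \<longrightarrow> r \<le> K \<longrightarrow> r - 1 < length L \<and> K div r \<le> L ! (r - 1)"
    and copies: "\<forall>i\<in>I. \<forall>M\<in>set L. tree_size (t i) \<le> M \<longrightarrow> embeds (t i) (U M)"
  shows "family_embeds I t (map U (filter ((<) 0) L))"
proof -
  obtain \<rho> where \<rho>: "inj_on \<rho> I" "\<forall>i\<in>I. 1 \<le> \<rho> i \<and> \<rho> i * tree_size (t i) \<le> K"
    using exists_rank_bounded_by_sum[OF assms(1,2)] by blast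
  have slot: "\<rho> i - 1 < length L \<and> tree_size (t i) \<le> L ! (\<rho> i - 1)" if i: "i \<in> I" for i
  proof (cases "\<rho> i = 1")
    case True then show ?thesis using first i \<open>L \<noteq> []\<close> by simp
  next
    case False
    have "\<rho> i \<le> \<rho> i * tree_size (t i)" using tree_size_pos[of "t i"] by simp
    with \<rho>(2) i have "\<rho> i \<le> K" by (meson order_trans)
    moreover have "2 \<le> \<rho> i" using \<rho>(2) i False by fastforce
    moreover have "tree_size (t i) \<le> K div \<rho> i"
      using \<rho>(2) i \<open>2 \<le> \<rho> i\<close> by (simp add: less_eq_div_iff_mult_less_eq mult.commute)
    ultimately show ?thesis using later by fastforce
  qed
  have slot_pos: "0 < L ! (\<rho> i - 1)" if "i \<in> I" for i
    using slot[OF that] tree_size_pos[of "t i"] by linarith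
  define pos where "pos i = length (filter ((<) 0) (take (\<rho> i - 1) L))" for i
  have "inj_on pos I"
  proof (rule inj_onI)
    fix i j assume ij: "i \<in> I" "j \<in> I" "pos i = pos j"
    then have "\<rho> i - 1 = \<rho> j - 1"
      using inj_onD[OF inj_on_length_filter_take[where P = "(<) 0" and xs = L],
          of "\<rho> i - 1" "\<rho> j - 1"]
        slot slot_pos unfolding pos_def by auto
    moreover have "1 \<le> \<rho> i" "1 \<le> \<rho> j" using \<rho>(2) ij by auto
    ultimately show "i = j" using \<rho>(1) ij by (metis inj_onD le_add_diff_inverse2)
  qed
  moreover have "pos i < length (map U (filter ((<) 0) L))
      \<and> embeds (t i) (map U (filter ((<) 0) L) ! pos i)" if i: "i \<in> I" for i
    using nth_filter_length_filter_take[of "\<rho> i - 1" L "(<) 0"] slot[OF i] slot_pos[OF i]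
      copies i unfolding pos_def by auto
  ultimately show ?thesis unfolding family_embeds_def by blast
qed

subsection \<open>Descending along a path\<close>

lemma list_emb_Cons_first_match:
  "list_emb P (x # xs) (us @ y # vs) \<Longrightarrow> \<forall>u\<in>set us. \<not> P x u \<Longrightarrow> P x y \<Longrightarrow> list_emb P xs vs"
  by (induction us) auto

text \<open>Here \<open>c\<close> plays the role of \<open>\<alpha>n\<close>. If some child \<open>h\<close> of the root has more than
  \<open>c\<close> nodes, the root and its other children (\<open>b\<close> nodes in all) go to the first path
  node whose label \<open>a\<close> satisfies \<open>b \<le> a\<close>, and \<open>h\<close> continues below it; otherwise
  the whole tree goes to the end of the path. The domination hypothesis is inherited
  by \<open>h\<close> because the path nodes skipped before \<open>a\<close> are all too small for \<open>b\<close>.\<close>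

lemma embeds_pathtree:
  fixes c :: real and side :: "nat \<Rightarrow> tree list" and base :: "tree list"
  assumes side_fits: "\<forall>a\<in>set as. \<forall>I t. finite I \<longrightarrow> (\<Sum>i\<in>I. tree_size (t i)) < a
      \<longrightarrow> family_embeds (I :: nat set) t (side a)"
    and base_fits: "\<forall>I t. finite I \<longrightarrow> (\<Sum>i\<in>I. tree_size (t i)) < n
      \<longrightarrow> (\<forall>i\<in>I. tree_size (t i) \<le> c) \<longrightarrow> family_embeds (I :: nat set) t base"
    and "tree_size T \<le> n"
    and "\<forall>bs. (\<forall>b\<in>set bs. 0 < b) \<longrightarrow> real (sum_list bs) < real (tree_size T) - c
      \<longrightarrow> list_emb (\<le>) bs as"
  shows "embeds T (pathtree (map side as) base)"
  using assms(3,4) side_fits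
proof (induction "tree_size T" arbitrary: T as rule: less_induct)
  case less
  obtain ts where T: "T = Node ts" by (cases T)
  have size_T: "tree_size T = 1 + (\<Sum>i<length ts. tree_size (ts ! i))"
    using T tree_size_Node by simp
  show ?case
  proof (cases "\<exists>h<length ts. c < tree_size (ts ! h)")
    case False
    have "\<forall>i\<in>{..<length ts}. tree_size (ts ! i) \<le> c" using False by (meson lessThan_iff not_less)
    then have "family_embeds {..<length ts} (nth ts) base"
      using base_fits size_T less.prems(1) by simp
    then have "embeds T (pathtree [] base)" unfolding T by (simp add: embeds_Node)
    then show ?thesis using embeds_pathtree_append[of T "[]"] by simp
  next
    case True
    then obtain h where h: "h < length ts" "c < tree_size (ts ! h)" by blast
    define I where "I = {..<length ts} - {h}"
    define b where "b = 1 + (\<Sum>i\<in>I. tree_size (ts ! i))"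
    have size_T_h: "tree_size T = tree_size (ts ! h) + b"
      using size_T h(1) by (simp add: I_def b_def sum.remove)
    have "list_emb (\<le>) [b] as"
      using less.prems(2) size_T_h h(2) by (auto simp: b_def)
    then have "\<exists>a\<in>set as. b \<le> a" by (auto dest: list_emb_set)
    then obtain pre a post where split: "as = pre @ a # post" "b \<le> a" "\<forall>y\<in>set pre. \<not> b \<le> y"
      using split_list_first_prop[of as "\<lambda>a. b \<le> a"] by blast
    have "embeds (ts ! h) (pathtree (map side post) base)"
    proof (rule less.hyps)
      show "tree_size (ts ! h) < tree_size T" "tree_size (ts ! h) \<le> n"
        using size_T_h less.prems(1) by (simp_all add: b_def)
      show "\<forall>a\<in>set post. \<forall>I t. finite I \<longrightarrow> (\<Sum>i\<in>I. tree_size (t i)) < a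
          \<longrightarrow> family_embeds (I :: nat set) t (side a)"
        using less.prems(3) split(1) by auto
      show "\<forall>bs. (\<forall>b\<in>set bs. 0 < b) \<longrightarrow> real (sum_list bs) < real (tree_size (ts ! h)) - c
          \<longrightarrow> list_emb (\<le>) bs post"
      proof (intro allI impI)
        fix bs :: "nat list"
        assume "\<forall>b\<in>set bs. 0 < b" "real (sum_list bs) < real (tree_size (ts ! h)) - c"
        then have "list_emb (\<le>) (b # bs) (pre @ a # post)"
          using less.prems(2) split(1) size_T_h by (auto simp: b_def)
        then show "list_emb (\<le>) bs post"
          using split(3,2) by (rule list_emb_Cons_first_match)
      qed
    qed
    moreover have "family_embeds I (nth ts) (side a)"
      using less.prems(3) split(1,2) by (auto simp: I_def b_def)
    ultimately have "family_embeds {..<length ts} (nth ts) (pathtree (map side post) base # side a)"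
      by (intro family_embeds_Cons) (simp_all add: I_def)
    then have "embeds T (pathtree (map side (a # post)) base)"
      unfolding T by (simp add: embeds_Node)
    then show ?thesis using embeds_pathtree_append split(1) by fastforce
  qed
qed

subsection \<open>The sequence \<open>a\<^sub>N\<close>\<close>

lemma aseq_bounds: "x \<in> set (aseq N) \<Longrightarrow> 1 \<le> x \<and> x \<le> N"
proof (induction N rule: less_induct)
  case (less N)
  then show ?case
    by (subst (asm) aseq.simps) (auto split: if_splits dest: less.IH[of "N div 2", rotated])
qed

lemma sum_list_split_at:
  fixes bs :: "nat list"
  assumes "D < sum_list bs"
  shows "\<exists>bs1 b bs2. bs = bs1 @ b # bs2 \<and> sum_list bs1 \<le> D \<and> D < sum_list bs1 + b"
  using assms
proof (induction bs arbitrary: D)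
  case Nil then show ?case by simp
next
  case (Cons x xs)
  show ?case
  proof (cases "D < x")
    case True then show ?thesis by (intro exI[of _ "[]"]) auto
  next
    case False
    with Cons.prems have "D - x < sum_list xs" by simp
    then obtain bs1 b bs2 where
      "xs = bs1 @ b # bs2" "sum_list bs1 \<le> D - x" "D - x < sum_list bs1 + b"
      using Cons.IH by blast
    with False show ?thesis by (intro exI[of _ "x # bs1"]) auto
  qed
qed

text \<open>If the sum exceeds \<open>\<lfloor>N/2\<rfloor>\<close>, the term straddling \<open>\<lfloor>N/2\<rfloor>\<close> is matched with the
  middle entry \<open>N\<close>, and the parts before and after it (each of sum at most \<open>\<lfloor>N/2\<rfloor>\<close>)
  go into the two copies of \<open>a(\<lfloor>N/2\<rfloor>)\<close>.\<close>

lemma list_emb_aseq: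
  assumes "\<forall>b\<in>set bs. 0 < b" and "sum_list bs \<le> N"
  shows "list_emb (\<le>) bs (aseq N)"
  using assms
proof (induction N arbitrary: bs rule: less_induct)
  case (less N)
  show ?case
  proof (cases "N \<le> 1")
    case True
    have "bs = [] \<or> (bs = [1] \<and> N = 1)"
    proof (cases bs)
      case (Cons b rest)
      with less.prems True have "b + sum_list rest \<le> N" "N \<le> 1" "0 < b" by auto
      then have "b = 1" "N = 1" "sum_list rest = 0" by linarith+
      moreover have "rest = []"
        using \<open>sum_list rest = 0\<close> less.prems(1) Cons
        by (cases rest) simp_all
      ultimately show ?thesis using Cons by simp
    qed simp
    then show ?thesis by (subst aseq.simps) auto
  next
    case False
    let ?D = "N div 2"
    have aseq_N: "aseq N = aseq ?D @ N # aseq ?D" using False by (subst aseq.simps) simp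
    show ?thesis
    proof (cases "sum_list bs \<le> ?D")
      case True
      moreover have "?D < N" using False by simp
      ultimately have "list_emb (\<le>) bs (aseq ?D)" using less.IH less.prems(1) by blast
      then show ?thesis unfolding aseq_N by (rule list_emb_prefix)
    next
      case False
      then obtain bs1 b bs2 where split: "bs = bs1 @ b # bs2" "sum_list bs1 \<le> ?D" "?D < sum_list bs1 + b"
        using sum_list_split_at[of ?D bs] by auto
      have "sum_list bs2 \<le> ?D" "b \<le> N" using split less.prems(2) by auto
      moreover have "?D < N" using \<open>\<not> N \<le> 1\<close> by simp
      ultimately have "list_emb (\<le>) bs1 (aseq ?D)" "list_emb (\<le>) bs2 (aseq ?D)"
        using less.IH[of ?D] less.prems(1) split(1,2) by simp_all
      with \<open>b \<le> N\<close> show ?thesis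
        unfolding aseq_N split(1) by (intro list_emb_append_mono) auto
    qed
  qed
qed

subsection \<open>The trees \<open>U\<^sub>n\<close>\<close>

definition side_sizes :: "nat \<Rightarrow> nat list" where
  "side_sizes x = (x - 1) # map (\<lambda>j. x div j) [2..<x + 1]"

definition base_sizes :: "real \<Rightarrow> nat \<Rightarrow> nat list" where
  "base_sizes alpha n = nat \<lfloor>alpha * real n\<rfloor> # map (\<lambda>j. (n - 1) div j) [2..<n + 1]"

lemma nth_Cons_map_upt_2:
  assumes "2 \<le> r" and "r \<le> m"
  shows "r - 1 < length (y # map f [2..<m + 1])" and "(y # map f [2..<m + 1]) ! (r - 1) = f r"
proof -
  obtain r' where "r = Suc (Suc r')" using assms(1) by (metis add_2_eq_Suc le_Suc_ex)
  then show "r - 1 < length (y # map f [2..<m + 1])" "(y # map f [2..<m + 1]) ! (r - 1) = f r"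
    using assms(2) by (simp_all del: upt_Suc)
qed

lemma Uf_eq: "Uf alpha m = (if m = 0 then [] else [Utree alpha m])"
  unfolding Utree_def by (subst (1 2) Uf.simps) (simp add: Let_def)

lemma concat_map_Uf:
  "\<forall>j\<in>set js. j < n \<Longrightarrow>
    concat (map (\<lambda>j. if j < n then Uf alpha j else []) js) = map (Utree alpha) (filter ((<) 0) js)"
  by (induction js) (auto simp: Uf_eq)

lemma Utree_unfold:
  assumes "0 < alpha" and "alpha < 1" and "2 \<le> n"
  shows "Utree alpha n = pathtree
      (map (\<lambda>x. map (Utree alpha) (filter ((<) 0) (side_sizes x))) (aseq (nat \<lfloor>(1 - alpha) * real n\<rfloor>)))
      (map (Utree alpha) (filter ((<) 0) (base_sizes alpha n)))"
proof -
  let ?N = "nat \<lfloor>(1 - alpha) * real n\<rfloor>"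
  let ?rec = "\<lambda>m. if m < n then Uf alpha m else []"
  have "(1 - alpha) * real n < real n" "alpha * real n < real n" using assms by auto
  then have "?N < n" "nat \<lfloor>alpha * real n\<rfloor> < n" using assms(3) by linarith+
  then have side_eq: "concat (map ?rec (side_sizes x)) = map (Utree alpha) (filter ((<) 0) (side_sizes x))"
    if "x \<in> set (aseq ?N)" for x
    using aseq_bounds[OF that]
    by (intro concat_map_Uf) (auto simp: side_sizes_def intro: le_less_trans[OF div_le_dividend])
  have base_eq: "concat (map ?rec (base_sizes alpha n)) = map (Utree alpha) (filter ((<) 0) (base_sizes alpha n))"
    using \<open>nat \<lfloor>alpha * real n\<rfloor> < n\<close> assms(3)
    by (intro concat_map_Uf) (auto simp: base_sizes_def intro: le_less_trans[OF div_le_dividend])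
  have "Uf alpha n = [pathtree (map (\<lambda>x. concat (map ?rec (side_sizes x))) (aseq ?N))
      (concat (map ?rec (base_sizes alpha n)))]"
    using assms(3) by (subst Uf.simps) (simp add: Let_def side_sizes_def base_sizes_def comp_def)
  also have "\<dots> = [pathtree
      (map (\<lambda>x. map (Utree alpha) (filter ((<) 0) (side_sizes x))) (aseq ?N))
      (map (Utree alpha) (filter ((<) 0) (base_sizes alpha n)))]"
    by (simp only: base_eq side_eq cong: map_cong)
  finally show ?thesis by (simp add: Utree_def)
qed

lemma family_embeds_side_copies:
  fixes t :: "'i::linorder \<Rightarrow> tree"
  assumes "finite I" and sum: "(\<Sum>i\<in>I. tree_size (t i)) < a"
    and smaller: "\<And>M T. M < a \<Longrightarrow> tree_size T \<le> M \<Longrightarrow> embeds T (Utree alpha M)"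
  shows "family_embeds I t (map (Utree alpha) (filter ((<) 0) (side_sizes a)))"
proof (rule family_embeds_copies[where K = "a - 1"])
  have "tree_size (t i) \<le> (\<Sum>i\<in>I. tree_size (t i))" if "i \<in> I" for i
    using \<open>finite I\<close> that by (intro member_le_sum) auto
  with sum show "\<forall>i\<in>I. tree_size (t i) \<le> side_sizes a ! 0"
    by (fastforce simp: side_sizes_def)
  show "\<forall>r. 2 \<le> r \<longrightarrow> r \<le> a - 1 \<longrightarrow>
      r - 1 < length (side_sizes a) \<and> (a - 1) div r \<le> side_sizes a ! (r - 1)"
  proof (intro allI impI)
    fix r assume "2 \<le> r" "r \<le> a - 1"
    then show "r - 1 < length (side_sizes a) \<and> (a - 1) div r \<le> side_sizes a ! (r - 1)"
      using nth_Cons_map_upt_2[of r a "a - 1" "\<lambda>j. a div j"]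
      by (simp del: upt_Suc add: side_sizes_def div_le_mono)
  qed
  have "\<forall>M\<in>set (side_sizes a). M < a"
    using sum by (auto simp: side_sizes_def intro: div_less_dividend)
  then show "\<forall>i\<in>I. \<forall>M\<in>set (side_sizes a). tree_size (t i) \<le> M \<longrightarrow> embeds (t i) (Utree alpha M)"
    using smaller by blast
qed (use assms in \<open>auto simp: side_sizes_def\<close>)

lemma family_embeds_base_copies:
  fixes t :: "'i::linorder \<Rightarrow> tree"
  assumes "alpha < 1" and "finite I" and sum: "(\<Sum>i\<in>I. tree_size (t i)) < n"
    and small: "\<forall>i\<in>I. tree_size (t i) \<le> alpha * real n"
    and smaller: "\<And>M T. M < n \<Longrightarrow> tree_size T \<le> M \<Longrightarrow> embeds T (Utree alpha M)"
  shows "family_embeds I t (map (Utree alpha) (filter ((<) 0) (base_sizes alpha n)))"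
proof (rule family_embeds_copies[where K = "n - 1"])
  show "\<forall>i\<in>I. tree_size (t i) \<le> base_sizes alpha n ! 0"
    using small by (simp add: base_sizes_def le_nat_floor)
  show "\<forall>r. 2 \<le> r \<longrightarrow> r \<le> n - 1 \<longrightarrow>
      r - 1 < length (base_sizes alpha n) \<and> (n - 1) div r \<le> base_sizes alpha n ! (r - 1)"
  proof (intro allI impI)
    fix r assume "2 \<le> r" "r \<le> n - 1"
    then show "r - 1 < length (base_sizes alpha n) \<and> (n - 1) div r \<le> base_sizes alpha n ! (r - 1)"
      using nth_Cons_map_upt_2[of r n "nat \<lfloor>alpha * real n\<rfloor>" "\<lambda>j. (n - 1) div j"]
      by (simp del: upt_Suc add: base_sizes_def)
  qed
  have "0 < n" using sum by simp
  with assms(1) have "alpha * real n < real n" by simp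
  with \<open>0 < n\<close> have "nat \<lfloor>alpha * real n\<rfloor> < n" by linarith
  then have "\<forall>M\<in>set (base_sizes alpha n). M < n"
    by (auto simp: base_sizes_def intro: le_less_trans[OF div_le_dividend])
  then show "\<forall>i\<in>I. \<forall>M\<in>set (base_sizes alpha n). tree_size (t i) \<le> M \<longrightarrow> embeds (t i) (Utree alpha M)"
    using smaller by blast
qed (use assms in \<open>auto simp: base_sizes_def\<close>)

lemma embeds_Utree:
  assumes "0 < alpha" and "alpha < 1" and "tree_size T \<le> n"
  shows "embeds T (Utree alpha n)"
  using assms(3)
proof (induction n arbitrary: T rule: less_induct)
  case (less n)
  obtain ts where T: "T = Node ts" by (cases T)
  show ?case
  proof (cases "n \<le> 1")
    case True
    have "ts = []"
    proof (rule ccontr)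
      assume "ts \<noteq> []"
      then have "tree_size (ts ! 0) \<le> (\<Sum>i<length ts. tree_size (ts ! i))"
        by (intro member_le_sum) auto
      then show False
        using tree_size_Node[of ts] tree_size_pos[of "ts ! 0"] less.prems True T by simp
    qed
    then show ?thesis using T embeds_leaf by simp
  next
    case False
    let ?N = "nat \<lfloor>(1 - alpha) * real n\<rfloor>"
    have "(1 - alpha) * real n < real n" using assms(1) False by simp
    then have "?N < n" using False by linarith
    have "embeds T (pathtree
      (map (\<lambda>x. map (Utree alpha) (filter ((<) 0) (side_sizes x))) (aseq ?N))
      (map (Utree alpha) (filter ((<) 0) (base_sizes alpha n))))"
    proof (rule embeds_pathtree[where c = "alpha * real n"])
      show "\<forall>a\<in>set (aseq ?N). \<forall>I t. finite I \<longrightarrow> (\<Sum>i\<in>I. tree_size (t i)) < a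
          \<longrightarrow> family_embeds (I :: nat set) t (map (Utree alpha) (filter ((<) 0) (side_sizes a)))"
      proof (intro ballI allI impI)
        fix a and I :: "nat set" and t
        assume "a \<in> set (aseq ?N)" "finite I" "(\<Sum>i\<in>I. tree_size (t i)) < a"
        moreover from \<open>a \<in> set (aseq ?N)\<close> have "a < n"
          using aseq_bounds \<open>?N < n\<close> by (meson le_less_trans)
        ultimately show "family_embeds I t (map (Utree alpha) (filter ((<) 0) (side_sizes a)))"
          using less.IH by (intro family_embeds_side_copies) auto
      qed
      show "\<forall>I t. finite I \<longrightarrow> (\<Sum>i\<in>I. tree_size (t i)) < n
          \<longrightarrow> (\<forall>i\<in>I. tree_size (t i) \<le> alpha * real n)
          \<longrightarrow> family_embeds (I :: nat set) t (map (Utree alpha) (filter ((<) 0) (base_sizes alpha n)))"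
        using assms(2) less.IH by (intro allI impI family_embeds_base_copies) auto
      show "\<forall>bs. (\<forall>b\<in>set bs. 0 < b) \<longrightarrow> real (sum_list bs) < real (tree_size T) - alpha * real n
          \<longrightarrow> list_emb (\<le>) bs (aseq ?N)"
      proof (intro allI impI)
        fix bs :: "nat list"
        assume "\<forall>b\<in>set bs. 0 < b" "real (sum_list bs) < real (tree_size T) - alpha * real n"
        moreover from this have "sum_list bs \<le> ?N"
          using less.prems by (simp add: le_nat_floor algebra_simps)
        ultimately show "list_emb (\<le>) bs (aseq ?N)" by (simp add: list_emb_aseq)
      qed
    qed (use less.prems in simp)
    then show ?thesis using Utree_unfold assms(1,2) False by simp
  qed
qed

theorem lemma3:
  fixes alpha :: real and n :: nat and T :: tree
  assumes "1/2 < alpha" and "alpha < 1"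
    and "card (tree_nodes T) = n"
  shows "\<exists>f. inj_on f (tree_nodes T) \<and> f ` tree_nodes T \<subseteq> tree_nodes (Utree alpha n) \<and>
             (\<forall>u\<in>tree_nodes T. \<forall>v\<in>tree_nodes T. f (NCA u v) = NCA (f u) (f v))"
proof -
  have "embeds T (Utree alpha n)"
    using assms by (intro embeds_Utree) (simp_all add: tree_size_def)
  then show ?thesis unfolding embeds_def nca_embedding_def .
qed

end
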